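(* Let $G=(V,E)$ be a finite planar embedded graph with $V=\{1,\dots,n\}$, let $\mathbf{p}$ be a packing of $G$, and let $V=V^+\sqcup V^-\sqcup V^=\sqcup V^0$ be a partition of the vertices. Then $\mathbf{p}$ is infinitesimally rigid (with respect to this partition) if and only if both of the following hold: (1) (Fixed radius condition) Every infinitesimal flex $\mathbf{p}'$ of $\mathbf{p}$ with $r_k'=0$ for all $k\in V^+\cup V^-\cup V^=$ is trivial; (2) (Stress existence condition) There exists an equilibrium stress $\omega$ on $(G,\mathbf{p})$ whose radial force sum $\omega_i=\sum_{j:(i,j)\in E}\omega_{ij}(r_i+r_j)$ is strictly positive for every $i\in V^-$, strictly negative for every $i\in V^+$, and equal to $0$ for every $i\in V^0$.
   Context: A packing of a planar embedded graph $G=(V,E)$, $V=\{1,\dots,n\}$, is a vector $\mathbf{p}=(x_1,y_1,r_1,\dots,x_n,y_n,r_n)\in\mathbb{R}^{3n}$ with all $r_i>0$ such that for every edge $(i,j)\in E$, $(r_i+r_j)^2=(x_i-x_j)^2+(y_i-y_j)^2$ (circle $i$ of center $\mathbf{p}_i=(x_i,y_i)$ and radius $r_i$ is externally tangent to circle $j$), and around each vertex the neighbors appear in the same counterclockwise order as in the given planar embedding. Disks not joined by an edge may overlap. The vertex set is partitioned into $V^+$ (radii allowed to increase or stay), $V^-$ (allowed to decrease or stay), $V^=$ (fixed radii), $V^0$ (free). An infinitesimal flex is a vector $\mathbf{p}'=(x_1',y_1',r_1',\dots,x_n',y_n',r_n')$ with $(\mathbf{p}_i-\mathbf{p}_j)\cdot(\mathbf{p}_i'-\mathbf{p}_j')=(r_i+r_j)(r_i'+r_j')$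 for all $(i,j)\in E$, where $\mathbf{p}_i'=(x_i',y_i')$. It is proper if $r_i'\ge 0$ for $i\in V^+$, $r_i'\le 0$ for $i\in V^-$, $r_i'=0$ for $i\in V^=$. It is trivial if it is the derivative at $t=0$ of a smooth family of congruent motions (rotations and translations of the plane applied to all centers, radii unchanged). The packing is infinitesimally rigid if every proper infinitesimal flex is trivial. A stress is a function $\omega:E\to\mathbb{R}$, $\omega_{ij}=\omega_{ji}$; it is an equilibrium stress if $\sum_{j:(i,j)\in E}\omega_{ij}(\mathbf{p}_i-\mathbf{p}_j)=0$ for every vertex $i$. *)

theory Defs
  imports "HOL-Analysis.Analysis"
begin

text \<open>Edges are a set of ordered pairs, required symmetric and
loop-free (an undirected simple graph); an ordered pair (i,j) in E is a dart.
A planar embedding is encoded combinatorially by a rotation system: rot i is the list of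
neighbours of i in counterclockwise order (up to cyclic shift).\<close>

definition verts :: "nat \<Rightarrow> nat set" where
  "verts n = {1..n}"

definition simple_graph :: "nat \<Rightarrow> (nat \<times> nat) set \<Rightarrow> bool" where
  "simple_graph n E \<longleftrightarrow> E \<subseteq> verts n \<times> verts n \<and> (\<forall>i j. (i,j) \<in> E \<longrightarrow> (j,i) \<in> E)
     \<and> (\<forall>i. (i,i) \<notin> E)"

definition nbrs :: "(nat \<times> nat) set \<Rightarrow> nat \<Rightarrow> nat set" where
  "nbrs E i = {j. (i,j) \<in> E}"

definition rotation_system :: "nat \<Rightarrow> (nat \<times> nat) set \<Rightarrow> (nat \<Rightarrow> nat list) \<Rightarrow> bool" where
  "rotation_system n E rot \<longleftrightarrow> (\<forall>i\<in>verts n. distinct (rot i) \<and> set (rot i) = nbrs E i)"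

definition cyc_next :: "nat list \<Rightarrow> nat \<Rightarrow> nat" where
  "cyc_next xs a = xs ! (((THE k. k < length xs \<and> xs ! k = a) + 1) mod length xs)"

text \<open>Face-tracing permutation on darts: (i,j) goes to (j, successor of i around j).\<close>
definition face_step :: "(nat \<Rightarrow> nat list) \<Rightarrow> nat \<times> nat \<Rightarrow> nat \<times> nat" where
  "face_step rot d = (snd d, cyc_next (rot (snd d)) (fst d))"

definition face_rel :: "(nat \<times> nat) set \<Rightarrow> (nat \<Rightarrow> nat list) \<Rightarrow> ((nat \<times> nat) \<times> (nat \<times> nat)) set" where
  "face_rel E rot = {(d, face_step rot d) | d. d \<in> E}"

definition num_faces :: "(nat \<times> nat) set \<Rightarrow> (nat \<Rightarrow> nat list) \<Rightarrow> nat" where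
  "num_faces E rot = card ((\<lambda>d. {e. (d,e) \<in> (face_rel E rot)\<^sup>*}) ` E)"

definition num_components :: "nat \<Rightarrow> (nat \<times> nat) set \<Rightarrow> nat" where
  "num_components n E = card ((\<lambda>v. {w. (v,w) \<in> E\<^sup>*}) ` verts n)"

definition num_isolated :: "nat \<Rightarrow> (nat \<times> nat) set \<Rightarrow> nat" where
  "num_isolated n E = card {v \<in> verts n. nbrs E v = {}}"

text \<open>Planarity of the rotation system: Euler's formula V - E + F = 2 on every component
(an isolated vertex counts as a component with one face).  Here card E counts darts,
i.e. twice the number of edges.\<close>
definition planar_embedded_graph :: "nat \<Rightarrow> (nat \<times> nat) set \<Rightarrow> (nat \<Rightarrow> nat list) \<Rightarrow> bool" where
  "planar_embedded_graph n E rot \<longleftrightarrow> simple_graph n E \<and> rotation_system n E rot \<and>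
     2 * int n - int (card E) + 2 * int (num_faces E rot) + 2 * int (num_isolated n E)
       = 4 * int (num_components n E)"

definition ccw_order :: "(nat \<Rightarrow> real) \<Rightarrow> (nat \<Rightarrow> real) \<Rightarrow> nat \<Rightarrow> nat list \<Rightarrow> bool" where
  "ccw_order x y i js \<longleftrightarrow> (\<exists>\<theta> :: nat \<Rightarrow> real.
      (\<forall>k < length js. let d = sqrt ((x (js!k) - x i)\<^sup>2 + (y (js!k) - y i)\<^sup>2) in
          d > 0 \<and> x (js!k) - x i = d * cos (\<theta> k) \<and> y (js!k) - y i = d * sin (\<theta> k)) \<and>
      (\<forall>k. Suc k < length js \<longrightarrow> \<theta> k < \<theta> (Suc k)) \<and>
      (length js > 0 \<longrightarrow> \<theta> (length js - 1) < \<theta> 0 + 2 * pi))"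

definition packing ::
  "nat \<Rightarrow> (nat \<times> nat) set \<Rightarrow> (nat \<Rightarrow> nat list) \<Rightarrow> (nat \<Rightarrow> real) \<Rightarrow> (nat \<Rightarrow> real) \<Rightarrow> (nat \<Rightarrow> real) \<Rightarrow> bool" where
  "packing n E rot x y r \<longleftrightarrow>
     (\<forall>i\<in>verts n. r i > 0) \<and>
     (\<forall>(i,j)\<in>E. (r i + r j)\<^sup>2 = (x i - x j)\<^sup>2 + (y i - y j)\<^sup>2) \<and>
     (\<forall>i\<in>verts n. ccw_order x y i (rot i))"

definition inf_flex ::
  "(nat \<times> nat) set \<Rightarrow> (nat \<Rightarrow> real) \<Rightarrow> (nat \<Rightarrow> real) \<Rightarrow> (nat \<Rightarrow> real) \<Rightarrow>
   (nat \<Rightarrow> real) \<Rightarrow> (nat \<Rightarrow> real) \<Rightarrow> (nat \<Rightarrow> real) \<Rightarrow> bool" where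
  "inf_flex E x y r x' y' r' \<longleftrightarrow>
     (\<forall>(i,j)\<in>E. (x i - x j) * (x' i - x' j) + (y i - y j) * (y' i - y' j) = (r i + r j) * (r' i + r' j))"

definition smooth_fun :: "(real \<Rightarrow> real) \<Rightarrow> bool" where
  "smooth_fun f \<longleftrightarrow> (\<forall>k t. ((deriv ^^ k) f) differentiable (at t))"

definition trivial_flex ::
  "nat \<Rightarrow> (nat \<Rightarrow> real) \<Rightarrow> (nat \<Rightarrow> real) \<Rightarrow> (nat \<Rightarrow> real) \<Rightarrow> (nat \<Rightarrow> real) \<Rightarrow> (nat \<Rightarrow> real) \<Rightarrow> bool" where
  "trivial_flex n x y x' y' r' \<longleftrightarrow>
     (\<exists>\<theta> a b :: real \<Rightarrow> real. smooth_fun \<theta> \<and> smooth_fun a \<and> smooth_fun b \<and>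
        \<theta> 0 = 0 \<and> a 0 = 0 \<and> b 0 = 0 \<and>
        (\<forall>i\<in>verts n.
           ((\<lambda>t. cos (\<theta> t) * x i - sin (\<theta> t) * y i + a t) has_real_derivative x' i) (at 0) \<and>
           ((\<lambda>t. sin (\<theta> t) * x i + cos (\<theta> t) * y i + b t) has_real_derivative y' i) (at 0) \<and>
           r' i = 0))"

definition vertex_partition :: "nat \<Rightarrow> nat set \<Rightarrow> nat set \<Rightarrow> nat set \<Rightarrow> nat set \<Rightarrow> bool" where
  "vertex_partition n Vp Vm Veq V0 \<longleftrightarrow> Vp \<union> Vm \<union> Veq \<union> V0 = verts n \<and>
     Vp \<inter> Vm = {} \<and> Vp \<inter> Veq = {} \<and> Vp \<inter> V0 = {} \<and> Vm \<inter> Veq = {} \<and> Vm \<inter> V0 = {} \<and>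
     Veq \<inter> V0 = {}"

definition proper_flex ::
  "nat set \<Rightarrow> nat set \<Rightarrow> nat set \<Rightarrow> (nat \<Rightarrow> real) \<Rightarrow> bool" where
  "proper_flex Vp Vm Veq r' \<longleftrightarrow> (\<forall>i\<in>Vp. r' i \<ge> 0) \<and> (\<forall>i\<in>Vm. r' i \<le> 0) \<and> (\<forall>i\<in>Veq. r' i = 0)"

definition inf_rigid ::
  "nat \<Rightarrow> (nat \<times> nat) set \<Rightarrow> nat set \<Rightarrow> nat set \<Rightarrow> nat set \<Rightarrow>
   (nat \<Rightarrow> real) \<Rightarrow> (nat \<Rightarrow> real) \<Rightarrow> (nat \<Rightarrow> real) \<Rightarrow> bool" where
  "inf_rigid n E Vp Vm Veq x y r \<longleftrightarrow>
     (\<forall>x' y' r'. inf_flex E x y r x' y' r' \<and> proper_flex Vp Vm Veq r' \<longrightarrow> trivial_flex n x y x' y' r')"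

definition stress :: "(nat \<times> nat) set \<Rightarrow> (nat \<Rightarrow> nat \<Rightarrow> real) \<Rightarrow> bool" where
  "stress E \<omega> \<longleftrightarrow> (\<forall>(i,j)\<in>E. \<omega> i j = \<omega> j i)"

definition equilibrium_stress ::
  "nat \<Rightarrow> (nat \<times> nat) set \<Rightarrow> (nat \<Rightarrow> real) \<Rightarrow> (nat \<Rightarrow> real) \<Rightarrow> (nat \<Rightarrow> nat \<Rightarrow> real) \<Rightarrow> bool" where
  "equilibrium_stress n E x y \<omega> \<longleftrightarrow> stress E \<omega> \<and>
     (\<forall>i\<in>verts n. (\<Sum>j\<in>nbrs E i. \<omega> i j * (x i - x j)) = 0 \<and>
                  (\<Sum>j\<in>nbrs E i. \<omega> i j * (y i - y j)) = 0)"

definition radial_force :: "(nat \<times> nat) set \<Rightarrow> (nat \<Rightarrow> real) \<Rightarrow> (nat \<Rightarrow> nat \<Rightarrow> real) \<Rightarrow> nat \<Rightarrow> real" where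
  "radial_force E r \<omega> i = (\<Sum>j\<in>nbrs E i. \<omega> i j * (r i + r j))"

end

theory Submission
  imports Defs "HOL-Library.Function_Algebras"
begin

(* Trivial flexes leave every radius unchanged, so infinitesimal rigidity splits into the fixed
   radius condition and the requirement that every proper flex keeps the radii of V+ and V-
   fixed.  On the cone of proper flexes the linear functional sum_(V-) r' - sum_(V+) r' is <= 0,
   so that requirement says it is also >= 0 there, which by the Farkas lemma means it is a
   combination of the constraints defining the cone.  Pairing stresses with flexes (virtual
   work) turns the edge multipliers of such a combination into an equilibrium stress with the
   prescribed signs of radial forces, and conversely pairing such a stress with a proper flex
   gives sum_i r'_i omega_i = 0 with every term <= 0.  Nothing about the packing beyond the
   symmetry of the edge set is needed: the argument is linear algebra at the given configuration. *)

(* Pointwise scaling, so that flexes (x', y', r') form a real vector space. *)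
instantiation "fun" :: (type, real_vector) real_vector
begin

definition "c *\<^sub>R f = (\<lambda>x. c *\<^sub>R f x)"

instance
  by standard (simp_all add: scaleR_fun_def fun_eq_iff scaleR_add_right scaleR_add_left)

end

lemma scaleR_fun_apply [simp]: "(c *\<^sub>R f) x = c *\<^sub>R f x"
  by (simp add: scaleR_fun_def)

lemma farkas_projection:
  fixes a :: "'j \<Rightarrow> 'v::real_vector \<Rightarrow> real"
  assumes "\<forall>i\<in>insert j J. linear (a i)" and "linear b" and "a j u \<noteq> 0"
    and "\<forall>v. (\<forall>i\<in>insert j J. a i v \<ge> 0) \<longrightarrow> b v \<ge> 0"
  shows "\<forall>v. (\<forall>i\<in>J. a i v - a j v / a j u * a i u \<ge> 0) \<longrightarrow> b v - a j v / a j u * b u \<ge> 0"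
proof (intro allI impI)
  fix v assume "\<forall>i\<in>J. a i v - a j v / a j u * a i u \<ge> 0"
  define z where "z = v - (a j v / a j u) *\<^sub>R u"
  have proj: "f z = f v - a j v / a j u * f u" if "linear f" for f
    using that by (simp add: z_def linear_diff linear_scale)
  have "a j z = 0"
    using assms(1,3) proj[of "a j"] by simp
  then have "\<forall>i\<in>insert j J. a i z \<ge> 0"
    using assms(1) proj \<open>\<forall>i\<in>J. _ \<ge> 0\<close> by auto
  then show "b v - a j v / a j u * b u \<ge> 0"
    using assms(4) proj[OF assms(2)] by auto
qed

lemma farkas_lemma:
  fixes a :: "'j \<Rightarrow> 'v::real_vector \<Rightarrow> real" and b :: "'v \<Rightarrow> real"
  assumes "finite J" and "\<forall>j\<in>J. linear (a j)" and "linear b"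
    and "\<forall>v. (\<forall>j\<in>J. a j v \<ge> 0) \<longrightarrow> b v \<ge> 0"
  shows "\<exists>c. (\<forall>j\<in>J. c j \<ge> 0) \<and> (\<forall>v. b v = (\<Sum>j\<in>J. c j * a j v))"
  using assms
proof (induction J arbitrary: a b rule: finite_induct)
  case empty
  have "b v = 0" for v
    using empty.prems(3) linear_neg[OF \<open>linear b\<close>, of v] by (metis empty_iff neg_0_le_iff_le order_antisym)
  then show ?case by simp
next
  case (insert j J)
  have extend: "\<exists>c'. (\<forall>i\<in>insert j J. c' i \<ge> 0) \<and> (\<forall>v. b v = (\<Sum>i\<in>insert j J. c' i * a i v))"
    if "\<forall>i\<in>J. c i \<ge> 0" and "c_j \<ge> 0" and "\<forall>v. b v = (\<Sum>i\<in>J. c i * a i v) + c_j * a j v"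
    for c c_j
  proof -
    have "(\<Sum>i\<in>J. (c(j := c_j)) i * a i v) = (\<Sum>i\<in>J. c i * a i v)" for v
      using insert.hyps(2) by (intro sum.cong) auto
    with that insert.hyps show ?thesis
      by (intro exI[of _ "c(j := c_j)"]) auto
  qed
  show ?case
  proof (cases "\<forall>v. (\<forall>i\<in>J. a i v \<ge> 0) \<longrightarrow> b v \<ge> 0")
    case True
    then obtain c where "\<forall>i\<in>J. c i \<ge> 0" and "\<forall>v. b v = (\<Sum>i\<in>J. c i * a i v)"
      using insert.IH insert.prems(1,2) by blast
    then show ?thesis
      using extend[of c 0] by simp
  next
    case False
    then obtain u where u: "\<forall>i\<in>J. a i u \<ge> 0" "b u < 0"
      by (auto simp: not_le)
    with insert.prems(3) have "a j u < 0"
      by (metis insert_iff not_le)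
    \<comment> \<open>Projecting along u onto the hyperplane a j = 0 reduces the system to the constraints in J.\<close>
    define t where "t v = a j v / a j u" for v
    have lin_shift: "linear (\<lambda>v. f v - t v * f u)" if "linear f" for f
      using that insert.prems(1) unfolding t_def linear_iff by (simp add: algebra_simps add_divide_distrib)
    obtain c where c: "\<forall>i\<in>J. c i \<ge> 0" "\<forall>v. b v - t v * b u = (\<Sum>i\<in>J. c i * (a i v - t v * a i u))"
      using insert.IH[of "\<lambda>i v. a i v - t v * a i u" "\<lambda>v. b v - t v * b u"] insert.prems
        farkas_projection[OF insert.prems(1,2) _ insert.prems(3), of u] \<open>a j u < 0\<close> lin_shift
      unfolding t_def by auto
    define c_j where "c_j = (b u - (\<Sum>i\<in>J. c i * a i u)) / a j u"
    have "(\<Sum>i\<in>J. c i * a i u) \<ge> 0"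
      using u(1) c(1) by (simp add: sum_nonneg)
    then have "c_j \<ge> 0"
      unfolding c_j_def using u(2) \<open>a j u < 0\<close> by (intro divide_nonpos_neg) auto
    moreover have "b v = (\<Sum>i\<in>J. c i * a i v) + c_j * a j v" for v
    proof -
      have "b v - t v * b u = (\<Sum>i\<in>J. c i * a i v) - (\<Sum>i\<in>J. c i * a i u) * t v"
        using c(2) by (simp add: right_diff_distrib sum_subtractf sum_distrib_left mult_ac)
      then show ?thesis
        using \<open>a j u < 0\<close> by (simp add: c_j_def t_def field_simps)
    qed
    ultimately show ?thesis
      using extend c(1) by blast
  qed
qed

lemma farkas_lemma_with_equalities:
  fixes a :: "'j \<Rightarrow> 'v::real_vector \<Rightarrow> real" and e :: "'k \<Rightarrow> 'v \<Rightarrow> real"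
  assumes "finite J" and "finite K" and "\<forall>j\<in>J. linear (a j)" and "\<forall>k\<in>K. linear (e k)"
    and "linear b"
    and "\<forall>v. (\<forall>j\<in>J. a j v \<ge> 0) \<and> (\<forall>k\<in>K. e k v = 0) \<longrightarrow> b v \<ge> 0"
  shows "\<exists>c d. (\<forall>j\<in>J. c j \<ge> 0) \<and>
    (\<forall>v. b v = (\<Sum>j\<in>J. c j * a j v) + (\<Sum>k\<in>K. d k * e k v))"
proof -
  \<comment> \<open>Each equality constraint becomes a pair of opposite inequalities.\<close>
  define f where "f p = (case p of Inl j \<Rightarrow> a j | Inr (k, s) \<Rightarrow> if s then e k else (\<lambda>v. - e k v))"
    for p
  have "\<forall>p\<in>J <+> K \<times> UNIV. linear (f p)"
    using assms(3,4) by (auto simp: f_def linear_iff)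
  moreover have "\<forall>v. (\<forall>p\<in>J <+> K \<times> UNIV. f p v \<ge> 0) \<longrightarrow> b v \<ge> 0"
  proof (intro allI impI)
    fix v assume nonneg: "\<forall>p\<in>J <+> K \<times> UNIV. f p v \<ge> 0"
    have "\<forall>j\<in>J. a j v \<ge> 0"
      using nonneg by (auto simp: f_def dest: bspec[OF _ InlI])
    moreover have "e k v \<ge> 0" "- e k v \<ge> 0" if "k \<in> K" for k
      using nonneg[rule_format, OF InrI[of "(k, True)"]] nonneg[rule_format, OF InrI[of "(k, False)"]]
        that by (simp_all add: f_def)
    ultimately show "b v \<ge> 0"
      using assms(6) by force
  qed
  ultimately obtain c where c: "\<forall>p\<in>J <+> K \<times> UNIV. c p \<ge> 0"
    "\<forall>v. b v = (\<Sum>p\<in>J <+> K \<times> UNIV. c p * f p v)"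
    using farkas_lemma[of "J <+> K \<times> UNIV" f b] assms(1,2,5) by auto
  have "b v = (\<Sum>j\<in>J. c (Inl j) * a j v) + (\<Sum>k\<in>K. (c (Inr (k, True)) - c (Inr (k, False))) * e k v)"
    for v
    using c(2) assms(1,2)
    by (simp add: sum.Plus sum.cartesian_product' UNIV_bool f_def algebra_simps)
  with c(1) show ?thesis
    by (intro exI[of _ "c \<circ> Inl"] exI[of _ "\<lambda>k. c (Inr (k, True)) - c (Inr (k, False))"]) auto
qed

lemma sum_sym_swap:
  assumes "sym E"
  shows "(\<Sum>(i, j)\<in>E. f j i) = (\<Sum>(i, j)\<in>E. f i j)"
proof -
  have "prod.swap ` E = E"
    using assms by (force simp: image_iff dest: symD)
  then show ?thesis
    using sum.reindex[of prod.swap E "\<lambda>(i, j). f i j"] by (simp add: comp_def case_prod_unfold)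
qed

lemma sum_edges_by_nbrs:
  assumes "finite V" and "E \<subseteq> V \<times> V"
  shows "(\<Sum>(i, j)\<in>E. f i j) = (\<Sum>i\<in>V. \<Sum>j\<in>nbrs E i. f i j)"
proof -
  have "E = Sigma V (nbrs E)"
    using assms(2) by (auto simp: nbrs_def)
  moreover have "finite (nbrs E i)" if "i \<in> V" for i
    using assms by (auto simp: nbrs_def intro: finite_subset)
  ultimately show ?thesis
    using assms(1) by (simp add: sum.Sigma)
qed

definition flex_defect ::
  "(nat \<Rightarrow> real) \<Rightarrow> (nat \<Rightarrow> real) \<Rightarrow> (nat \<Rightarrow> real) \<Rightarrow>
   (nat \<Rightarrow> real) \<Rightarrow> (nat \<Rightarrow> real) \<Rightarrow> (nat \<Rightarrow> real) \<Rightarrow> nat \<Rightarrow> nat \<Rightarrow> real" where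
  "flex_defect x y r x' y' r' i j =
     (r i + r j) * (r' i + r' j) - ((x i - x j) * (x' i - x' j) + (y i - y j) * (y' i - y' j))"

lemma inf_flex_iff_flex_defect:
  "inf_flex E x y r x' y' r' \<longleftrightarrow> (\<forall>(i, j)\<in>E. flex_defect x y r x' y' r' i j = 0)"
  by (auto simp: inf_flex_def flex_defect_def)

(* Virtual work: the defect of an edge splits into one term at each endpoint, and
   collecting the terms at a vertex yields the forces of the stress there. *)
lemma sum_stress_flex_defect:
  assumes "finite V" and "E \<subseteq> V \<times> V" and "sym E"
    and "\<And>i j. (i, j) \<in> E \<Longrightarrow> \<omega> i j = l i j + l j i"
  shows "(\<Sum>(i, j)\<in>E. l i j * flex_defect x y r x' y' r' i j) =
    (\<Sum>i\<in>V. r' i * radial_force E r \<omega> i - x' i * (\<Sum>j\<in>nbrs E i. \<omega> i j * (x i - x j))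
       - y' i * (\<Sum>j\<in>nbrs E i. \<omega> i j * (y i - y j)))"
proof -
  define P where "P i j = (r i + r j) * r' i - (x i - x j) * x' i - (y i - y j) * y' i" for i j
  have "(\<Sum>(i, j)\<in>E. l i j * flex_defect x y r x' y' r' i j) =
      (\<Sum>(i, j)\<in>E. l i j * P i j) + (\<Sum>(i, j)\<in>E. l i j * P j i)"
    unfolding sum.distrib[symmetric]
    by (intro sum.cong) (auto simp: flex_defect_def P_def algebra_simps)
  also have "(\<Sum>(i, j)\<in>E. l i j * P j i) = (\<Sum>(i, j)\<in>E. l j i * P i j)"
    using sum_sym_swap[OF assms(3), of "\<lambda>i j. l j i * P i j"] by simp
  also have "(\<Sum>(i, j)\<in>E. l i j * P i j) + \<dots> = (\<Sum>(i, j)\<in>E. \<omega> i j * P i j)"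
    unfolding sum.distrib[symmetric] using assms(4)
    by (intro sum.cong) (auto simp: algebra_simps)
  also have "\<dots> = (\<Sum>i\<in>V. \<Sum>j\<in>nbrs E i. \<omega> i j * P i j)"
    using sum_edges_by_nbrs[OF assms(1,2)] .
  also have "\<dots> = (\<Sum>i\<in>V. r' i * radial_force E r \<omega> i - x' i * (\<Sum>j\<in>nbrs E i. \<omega> i j * (x i - x j))
       - y' i * (\<Sum>j\<in>nbrs E i. \<omega> i j * (y i - y j)))"
    unfolding radial_force_def P_def
    by (intro sum.cong refl) (simp add: sum_distrib_left sum.distrib sum_subtractf algebra_simps)
  finally show ?thesis .
qed

definition signed_equilibrium_stress ::
  "nat \<Rightarrow> (nat \<times> nat) set \<Rightarrow> nat set \<Rightarrow> nat set \<Rightarrow> nat set \<Rightarrow>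
   (nat \<Rightarrow> real) \<Rightarrow> (nat \<Rightarrow> real) \<Rightarrow> (nat \<Rightarrow> real) \<Rightarrow> (nat \<Rightarrow> nat \<Rightarrow> real) \<Rightarrow> bool" where
  "signed_equilibrium_stress n E Vp Vm V0 x y r \<omega> \<longleftrightarrow> equilibrium_stress n E x y \<omega> \<and>
     (\<forall>i\<in>Vm. radial_force E r \<omega> i > 0) \<and>
     (\<forall>i\<in>Vp. radial_force E r \<omega> i < 0) \<and>
     (\<forall>i\<in>V0. radial_force E r \<omega> i = 0)"

lemma radius_fixed_if_signed_equilibrium_stress:
  assumes "E \<subseteq> verts n \<times> verts n" and "sym E" and "vertex_partition n Vp Vm Veq V0"
    and "signed_equilibrium_stress n E Vp Vm V0 x y r \<omega>"
    and "inf_flex E x y r x' y' r'" and "proper_flex Vp Vm Veq r'"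
    and "i \<in> Vp \<union> Vm"
  shows "r' i = 0"
proof -
  let ?\<rho> = "radial_force E r \<omega>"
  have eq: "equilibrium_stress n E x y \<omega>"
    and signs: "\<forall>k\<in>Vm. ?\<rho> k > 0" "\<forall>k\<in>Vp. ?\<rho> k < 0" "\<forall>k\<in>V0. ?\<rho> k = 0"
    using assms(4) by (auto simp: signed_equilibrium_stress_def)
  have "(\<Sum>(i, j)\<in>E. \<omega> i j / 2 * flex_defect x y r x' y' r' i j) = 0"
    using assms(5) by (intro sum.neutral) (auto simp: inf_flex_iff_flex_defect)
  moreover have "\<omega> i j = \<omega> i j / 2 + \<omega> j i / 2" if "(i, j) \<in> E" for i j
    using eq that by (auto simp: equilibrium_stress_def stress_def)
  ultimately have "(\<Sum>k\<in>verts n. r' k * ?\<rho> k) = 0"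
    using sum_stress_flex_defect[OF _ assms(1,2), of \<omega> "\<lambda>i j. \<omega> i j / 2" x y r x' y' r'] eq
    by (simp add: verts_def equilibrium_stress_def)
  moreover have "r' k * ?\<rho> k \<le> 0" if k: "k \<in> verts n" for k
  proof -
    consider "k \<in> Vp" | "k \<in> Vm" | "k \<in> Veq" | "k \<in> V0"
      using k assms(3) by (auto simp: vertex_partition_def)
    then show ?thesis
      using assms(6) signs unfolding proper_flex_def
      by cases (auto simp: mult_nonneg_nonpos mult_nonpos_nonneg)
  qed
  ultimately have "r' k * ?\<rho> k = 0" if "k \<in> verts n" for k
    using sum_nonneg_eq_0_iff[of "verts n" "\<lambda>k. - (r' k * ?\<rho> k)"] that
    by (simp add: verts_def sum_negf)
  moreover have "i \<in> verts n" and "?\<rho> i \<noteq> 0"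
    using assms(3,7) signs by (auto simp: vertex_partition_def)
  ultimately show ?thesis by auto
qed

type_synonym flex = "(nat \<Rightarrow> real) \<times> (nat \<Rightarrow> real) \<times> (nat \<Rightarrow> real)"

lemma radii_fixed_certificate:
  assumes "E \<subseteq> verts n \<times> verts n" and "vertex_partition n Vp Vm Veq V0"
    and fixed: "\<forall>x' y' r'. inf_flex E x y r x' y' r' \<and> proper_flex Vp Vm Veq r' \<longrightarrow> (\<forall>i\<in>Vp \<union> Vm. r' i = 0)"
  obtains c l \<mu> where "\<forall>i\<in>Vp \<union> Vm. c i \<ge> 0"
    and "\<And>x' y' r'. (\<Sum>i\<in>Vm. r' i) - (\<Sum>i\<in>Vp. r' i) =
      (\<Sum>i\<in>Vp \<union> Vm. c i * (if i \<in> Vp then 1 else - 1) * r' i)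
      + (\<Sum>(i, j)\<in>E. l i j * flex_defect x y r x' y' r' i j) + (\<Sum>i\<in>Veq. \<mu> i * r' i)"
proof -
  have part: "Vp \<union> Vm \<union> Veq \<union> V0 = verts n" "Vp \<inter> Vm = {}"
    using assms(2) by (auto simp: vertex_partition_def)
  then have fin: "finite Vp" "finite Vm" "finite Veq"
    by (metis finite_Un finite_atLeastAtMost verts_def)+
  have "finite E"
    by (rule finite_subset[OF assms(1)]) (simp add: verts_def)
  define a :: "nat \<Rightarrow> flex \<Rightarrow> real" where
    "a i = (\<lambda>(x', y', r'). (if i \<in> Vp then 1 else - 1) * r' i)" for i
  define e :: "(nat \<times> nat) + nat \<Rightarrow> flex \<Rightarrow> real" where
    "e k = (case k of Inl (i, j) \<Rightarrow> (\<lambda>(x', y', r'). flex_defect x y r x' y' r' i j)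
                    | Inr i \<Rightarrow> (\<lambda>(x', y', r'). r' i))" for k
  \<comment> \<open>b is \<open>\<le> 0\<close> on every proper flex, so \<open>b \<ge> 0\<close> there says exactly that the radii in Vp and Vm stay fixed.\<close>
  define b :: "flex \<Rightarrow> real" where
    "b = (\<lambda>(x', y', r'). (\<Sum>i\<in>Vm. r' i) - (\<Sum>i\<in>Vp. r' i))"
  have "\<forall>i\<in>Vp \<union> Vm. linear (a i)"
    by (auto simp: a_def linear_iff case_prod_unfold)
  moreover have "\<forall>k\<in>E <+> Veq. linear (e k)"
    by (auto simp: e_def linear_iff case_prod_unfold flex_defect_def algebra_simps)
  moreover have "linear b"
    by (simp add: b_def linear_iff case_prod_unfold sum.distrib sum_distrib_left algebra_simps)
  moreover have "\<forall>v. (\<forall>i\<in>Vp \<union> Vm. a i v \<ge> 0) \<and> (\<forall>k\<in>E <+> Veq. e k v = 0) \<longrightarrow> b v \<ge> 0"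
  proof (intro allI impI, elim conjE)
    fix v :: flex
    obtain x' y' r' where v: "v = (x', y', r')"
      by (cases v) auto
    assume signs: "\<forall>i\<in>Vp \<union> Vm. a i v \<ge> 0" and eqs: "\<forall>k\<in>E <+> Veq. e k v = 0"
    have flex: "inf_flex E x y r x' y' r'"
      using eqs by (auto simp: inf_flex_iff_flex_defect e_def v dest: bspec[OF _ InlI])
    have "proper_flex Vp Vm Veq r'"
      using signs eqs part(2)
      by (auto simp: proper_flex_def a_def e_def v disjoint_iff dest: bspec[OF _ InrI] split: if_splits)
    with flex have "\<forall>i\<in>Vp \<union> Vm. r' i = 0"
      using fixed by blast
    then show "b v \<ge> 0"
      by (simp add: b_def v)
  qed
  ultimately obtain c d where "\<forall>i\<in>Vp \<union> Vm. c i \<ge> 0"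
    and farkas: "\<forall>v. b v = (\<Sum>i\<in>Vp \<union> Vm. c i * a i v) + (\<Sum>k\<in>E <+> Veq. d k * e k v)"
    using farkas_lemma_with_equalities[of "Vp \<union> Vm" "E <+> Veq" a e b] fin \<open>finite E\<close>
    by auto
  moreover have "(\<Sum>k\<in>E <+> Veq. d k * e k (x', y', r')) =
      (\<Sum>(i, j)\<in>E. d (Inl (i, j)) * flex_defect x y r x' y' r' i j) + (\<Sum>i\<in>Veq. d (Inr i) * r' i)"
    for x' y' r'
    using \<open>finite E\<close> fin by (simp add: sum.Plus e_def comp_def case_prod_unfold)
  ultimately show ?thesis
    using farkas[rule_format, of "(_, _, _)"]
    by (intro that[of c "\<lambda>i j. d (Inl (i, j))" "\<lambda>i. d (Inr i)"]) (simp_all add: a_def b_def mult.assoc add.assoc)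
qed

lemma signed_equilibrium_stress_of_certificate:
  assumes "E \<subseteq> verts n \<times> verts n" and "sym E" and "vertex_partition n Vp Vm Veq V0"
    and "\<forall>i\<in>Vp \<union> Vm. c i \<ge> 0"
    and certificate: "\<And>x' y' r'. (\<Sum>i\<in>Vm. r' i) - (\<Sum>i\<in>Vp. r' i) =
      (\<Sum>i\<in>Vp \<union> Vm. c i * (if i \<in> Vp then 1 else - 1) * r' i)
      + (\<Sum>(i, j)\<in>E. l i j * flex_defect x y r x' y' r' i j) + (\<Sum>i\<in>Veq. \<mu> i * r' i)"
  shows "signed_equilibrium_stress n E Vp Vm V0 x y r (\<lambda>i j. l i j + l j i)"
proof -
  define \<omega> where "\<omega> = (\<lambda>i j. l i j + l j i)"
  let ?\<rho> = "radial_force E r \<omega>"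
  let ?Fx = "\<lambda>i. \<Sum>j\<in>nbrs E i. \<omega> i j * (x i - x j)"
  let ?Fy = "\<lambda>i. \<Sum>j\<in>nbrs E i. \<omega> i j * (y i - y j)"
  have fin: "finite (verts n)" "finite Vp" "finite Vm" "finite Veq"
    using assms(3) by (auto simp: verts_def vertex_partition_def intro: finite_subset)
  have part: "Vp \<union> Vm \<union> Veq \<union> V0 = verts n" "Vp \<inter> Vm = {}" "Vp \<inter> Veq = {}" "Vm \<inter> Veq = {}"
    "Vp \<inter> V0 = {}" "Vm \<inter> V0 = {}" "Veq \<inter> V0 = {}"
    using assms(3) by (auto simp: vertex_partition_def)
  have identity: "(\<Sum>i\<in>Vm. r' i) - (\<Sum>i\<in>Vp. r' i) =
      (\<Sum>i\<in>Vp \<union> Vm. c i * (if i \<in> Vp then 1 else - 1) * r' i)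
      + (\<Sum>i\<in>verts n. r' i * ?\<rho> i - x' i * ?Fx i - y' i * ?Fy i) + (\<Sum>i\<in>Veq. \<mu> i * r' i)"
    for x' y' r'
    using certificate sum_stress_flex_defect[OF fin(1) assms(1,2), of \<omega> l] by (simp add: \<omega>_def)
  \<comment> \<open>Evaluating the identity at unit vectors reads off its coefficients.\<close>
  define \<delta> :: "nat \<Rightarrow> nat \<Rightarrow> real" where "\<delta> k = (\<lambda>i. of_bool (i = k))" for k
  have "?Fx k = 0" and "?Fy k = 0" if "k \<in> verts n" for k
    using identity[where x'="\<delta> k" and y'="\<lambda>_. 0" and r'="\<lambda>_. 0"]
      identity[where x'="\<lambda>_. 0" and y'="\<delta> k" and r'="\<lambda>_. 0"] that fin
    by (simp_all add: \<delta>_def sum_negf)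
  moreover have "stress E \<omega>"
    by (simp add: stress_def \<omega>_def)
  ultimately have "equilibrium_stress n E x y \<omega>"
    by (simp add: equilibrium_stress_def)
  have radial: "?\<rho> k = (if k \<in> Vp then - 1 - c k else if k \<in> Vm then 1 + c k else 0)"
    if "k \<in> Vp \<union> Vm \<union> V0" for k
  proof -
    have "k \<in> verts n" "k \<notin> Veq"
      using that part by auto
    then show ?thesis
      using identity[where x'="\<lambda>_. 0" and y'="\<lambda>_. 0" and r'="\<delta> k"] fin part(2)
      by (auto simp: \<delta>_def Int_insert_right disjoint_iff)
  qed
  have "?\<rho> k < 0" if "k \<in> Vp" for k
    using radial[of k] bspec[OF assms(4), of k] that by simp
  moreover have "?\<rho> k > 0" if "k \<in> Vm" for k
    using radial[of k] bspec[OF assms(4), of k] that part(2) by auto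
  moreover have "?\<rho> k = 0" if "k \<in> V0" for k
    using radial[of k] that part(5,6) by auto
  ultimately show ?thesis
    using \<open>equilibrium_stress n E x y \<omega>\<close>
    unfolding \<omega>_def[symmetric] signed_equilibrium_stress_def by blast
qed

lemma signed_equilibrium_stress_if_radii_fixed:
  assumes "E \<subseteq> verts n \<times> verts n" and "sym E" and "vertex_partition n Vp Vm Veq V0"
    and "\<forall>x' y' r'. inf_flex E x y r x' y' r' \<and> proper_flex Vp Vm Veq r' \<longrightarrow> (\<forall>i\<in>Vp \<union> Vm. r' i = 0)"
  shows "\<exists>\<omega>. signed_equilibrium_stress n E Vp Vm V0 x y r \<omega>"
  by (rule radii_fixed_certificate[OF assms(1,3,4)], rule exI,
      rule signed_equilibrium_stress_of_certificate[OF assms(1-3)], assumption+)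

lemma trivial_flex_radius_zero:
  assumes "trivial_flex n x y x' y' r'" and "i \<in> verts n"
  shows "r' i = 0"
  using assms by (auto simp: trivial_flex_def)

lemma inf_rigid_iff_fixed_radius_rigid_and_radii_fixed:
  assumes "Vp \<union> Vm \<subseteq> verts n"
  shows "inf_rigid n E Vp Vm Veq x y r \<longleftrightarrow>
    (\<forall>x' y' r'. inf_flex E x y r x' y' r' \<and> (\<forall>k\<in>Vp \<union> Vm \<union> Veq. r' k = 0)
       \<longrightarrow> trivial_flex n x y x' y' r') \<and>
    (\<forall>x' y' r'. inf_flex E x y r x' y' r' \<and> proper_flex Vp Vm Veq r' \<longrightarrow> (\<forall>i\<in>Vp \<union> Vm. r' i = 0))"
    (is "_ \<longleftrightarrow> ?fixed_radius_rigid \<and> ?radii_fixed")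
proof
  assume rigid: "inf_rigid n E Vp Vm Veq x y r"
  show "?fixed_radius_rigid \<and> ?radii_fixed"
  proof (intro conjI allI impI)
    fix x' y' r' assume "inf_flex E x y r x' y' r' \<and> (\<forall>k\<in>Vp \<union> Vm \<union> Veq. r' k = 0)"
    then show "trivial_flex n x y x' y' r'"
      using rigid by (auto simp: inf_rigid_def proper_flex_def)
  next
    fix x' y' r' assume "inf_flex E x y r x' y' r' \<and> proper_flex Vp Vm Veq r'"
    then have "trivial_flex n x y x' y' r'"
      using rigid by (simp add: inf_rigid_def)
    then show "\<forall>i\<in>Vp \<union> Vm. r' i = 0"
      using assms trivial_flex_radius_zero by blast
  qed
next
  assume "?fixed_radius_rigid \<and> ?radii_fixed"
  then show "inf_rigid n E Vp Vm Veq x y r"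
    unfolding inf_rigid_def proper_flex_def by blast
qed

lemma radii_fixed_iff_signed_equilibrium_stress:
  assumes "E \<subseteq> verts n \<times> verts n" and "sym E" and "vertex_partition n Vp Vm Veq V0"
  shows "(\<forall>x' y' r'. inf_flex E x y r x' y' r' \<and> proper_flex Vp Vm Veq r' \<longrightarrow> (\<forall>i\<in>Vp \<union> Vm. r' i = 0))
    \<longleftrightarrow> (\<exists>\<omega>. signed_equilibrium_stress n E Vp Vm V0 x y r \<omega>)"
    (is "?radii_fixed \<longleftrightarrow> ?stress")
proof
  assume ?radii_fixed
  then show ?stress
    by (rule signed_equilibrium_stress_if_radii_fixed[OF assms])
next
  assume ?stress
  then show ?radii_fixed
    using radius_fixed_if_signed_equilibrium_stress[OF assms] by blast
qed

theorem mainTheorem1: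
  fixes n :: nat and E :: "(nat \<times> nat) set" and rot :: "nat \<Rightarrow> nat list"
    and x y r :: "nat \<Rightarrow> real" and Vp Vm Veq V0 :: "nat set"
  assumes "planar_embedded_graph n E rot"
    and "packing n E rot x y r"
    and "vertex_partition n Vp Vm Veq V0"
  shows "inf_rigid n E Vp Vm Veq x y r \<longleftrightarrow>
    ((\<forall>x' y' r'. inf_flex E x y r x' y' r' \<and> (\<forall>k\<in>Vp \<union> Vm \<union> Veq. r' k = 0)
                 \<longrightarrow> trivial_flex n x y x' y' r') \<and>
     (\<exists>\<omega>. equilibrium_stress n E x y \<omega> \<and>
         (\<forall>i\<in>Vm. radial_force E r \<omega> i > 0) \<and>
         (\<forall>i\<in>Vp. radial_force E r \<omega> i < 0) \<and>
         (\<forall>i\<in>V0. radial_force E r \<omega> i = 0)))"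
proof -
  have edges: "E \<subseteq> verts n \<times> verts n" and "sym E"
    using assms(1) by (auto simp: planar_embedded_graph_def simple_graph_def sym_def)
  have "Vp \<union> Vm \<subseteq> verts n"
    using assms(3) by (auto simp: vertex_partition_def)
  then show ?thesis
    unfolding inf_rigid_iff_fixed_radius_rigid_and_radii_fixed[OF \<open>Vp \<union> Vm \<subseteq> verts n\<close>]
      radii_fixed_iff_signed_equilibrium_stress[OF edges \<open>sym E\<close> assms(3)]
      signed_equilibrium_stress_def
    by simp
qed

end
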